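(* For all $i\ge0$, $j\ge-1$ and $X\in\{A,B,C,D\}$, $L_j^W\cdot F_iM_X\subset F_{i-j}M_X$.
   Context: Let $\Lambda(4)$ be the Grassmann superalgebra on odd generators $\xi_1,\dots,\xi_4$; $\xi_I=\xi_{i_1}\cdots\xi_{i_r}$, $\xi_{ij}=\xi_i\xi_j$. Let $K(1,4)_+=\mathbb C[t]\otimes\Lambda(4)$ with bracket $[f,g]=(2f-\sum_i\xi_i\partial_{\xi_i}f)\partial_tg-\partial_tf\,(2g-\sum_i\xi_i\partial_{\xi_i}g)+(-1)^{p(f)}\sum_i\partial_{\xi_i}f\,\partial_{\xi_i}g$, and $\mathfrak g=K(1,4)_+\oplus\mathbb CC$ the central extension by the 2-cocycle $\psi$ whose only nonzero values on the basis $\{t^m\xi_I\}$ are (up to skew-symmetry) $\psi(1,\xi_1\xi_2\xi_3\xi_4)=-2$, $\psi(\xi_i,\partial_{\xi_i}(\xi_1\xi_2\xi_3\xi_4))=-1$. Grade by $\deg t^m\xi_I=2m+|I|-2$, $\deg C=0$; $\mathfrak g_0=\langle C,t,\xi_{ij}\rangle$. $\mathfrak g_0^{ss}$ is spanned by $e_x=\frac12(-\xi_{13}-\xi_{24}-i\xi_{14}+i\xi_{23})$, $f_x=\frac12(\xi_{13}+\xi_{24}-i\xi_{14}+i\xi_{23})$, $h_x=-i\xi_{12}+i\xi_{34}$, $e_y=\frac12(-\xi_{13}+\xi_{24}+i\xi_{14}+i\xi_{23})$, $f_y=\frac12(\xi_{13}-\xi_{24}+i\xi_{14}+i\xi_{23})$,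 $h_y=-i\xi_{12}-i\xi_{34}$, identified with $x_1\partial_{x_2},x_2\partial_{x_1},x_1\partial_{x_1}-x_2\partial_{x_2},y_1\partial_{y_2},y_2\partial_{y_1},y_1\partial_{y_1}-y_2\partial_{y_2}$. Let $V_A=\mathbb C[x_1,x_2,y_1,y_2]$, $V_B=\mathbb C[\partial_{x_1},\partial_{x_2},y_1,y_2]$, $V_C=\mathbb C[\partial_{x_1},\partial_{x_2},\partial_{y_1},\partial_{y_2}]$, $V_D=\mathbb C[x_1,x_2,\partial_{y_1},\partial_{y_2}]$, on which $\mathfrak g_0^{ss}$ acts by derivations with $x_i\partial_{x_j}(x_k)=\delta_{jk}x_i$, $x_i\partial_{x_j}(\partial_{x_k})=-\delta_{ik}\partial_{x_j}$, $x_i\partial_{x_j}$ killing $y$- and $\partial_y$-variables, symmetrically for $y$. Let $E_x,E_y$ be the derivations $x_1\partial_{x_1}+x_2\partial_{x_2}$, $y_1\partial_{y_1}+y_2\partial_{y_2}$ with the same rule; $t$ acts as $-\frac12(E_x+E_y)+i_X$, $C$ as $\frac12(E_x-E_y)+j_X$, $(i_X,j_X)=(0,0),(1,-1),(2,0),(1,1)$ for $X=A,B,C,D$. $V_X^{m,n}$: subspace with $E_x=m,E_y=n$. $M_X=\bigoplus_{m,n}U(\mathfrak g)\otimes_{U(\mathfrak g_{\ge0})}V_X^{m,n}\cong U(\mathfrak g_{<0})\otimes V_X$ ($\mathfrak g_{>0}$ acting trivially on $V_X$). For $i\ge0$, $F_iU(\mathfrak g_{<0})$ is the span of products of at most $i$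 elements of $\mathfrak g_{<0}$, $F_iM_X=F_iU(\mathfrak g_{<0})\otimes V_X$, and $F_kM_X=0$ for $k<0$. Let $W(1,0)=\{p(t)\partial_t\}$ with its standard filtration $L_j^W=\{p(t)\partial_t:\ p\in t^{j+1}\mathbb C[t]\}$ ($j\ge-1$), embedded in $\mathfrak g$ as a Lie subalgebra via $p(t)\partial_t\mapsto\frac{p(t)}2\in\mathbb C[t]\otimes1\subset K(1,4)_+$; $L_j^W$ acts on $M_X$ through this embedding. *)

theory Defs
  imports Complex_Main "HOL-Computational_Algebra.Polynomial"
begin

section \<open>The Lie superalgebra g = K(1,4)_+ + C C\<close>

text \<open>Basis of g: Tm m I stands for t^m xi_I (I a subset of {1,2,3,4}), Cen for C.\<close>
datatype GB = Tm nat "nat set" | Cen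

definition gbasis :: "GB set" where
  "gbasis = {Tm m I | m I. I \<subseteq> {1,2,3,4}} \<union> {Cen}"

fun gdeg :: "GB \<Rightarrow> int" where
  "gdeg (Tm m I) = 2 * int m + int (card I) - 2"
| "gdeg Cen = 0"

fun gpar :: "GB \<Rightarrow> nat" where
  "gpar (Tm m I) = card I mod 2"
| "gpar Cen = 0"

text \<open>number of indices of I smaller than i (sign of the left derivative)\<close>
definition ltc :: "nat \<Rightarrow> nat set \<Rightarrow> nat" where
  "ltc i I = card {k \<in> I. k < i}"

text \<open>coefficient of xi_K in the product xi_I xi_J\<close>
definition prodc :: "nat set \<Rightarrow> nat set \<Rightarrow> nat set \<Rightarrow> complex" where
  "prodc I J K = (if I \<inter> J = {} \<and> K = I \<union> J
      then (-1) ^ card {(a, b). a \<in> I \<and> b \<in> J \<and> b < a} else 0)"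

text \<open>coefficient of xi_K in (d_{xi_i} xi_I)(d_{xi_i} xi_J)\<close>
definition dcoef :: "nat \<Rightarrow> nat set \<Rightarrow> nat set \<Rightarrow> nat set \<Rightarrow> complex" where
  "dcoef i I J K = (if i \<in> I \<and> i \<in> J
      then (-1) ^ (ltc i I + ltc i J) * prodc (I - {i}) (J - {i}) K else 0)"

text \<open>the cocycle psi on basis elements (super-skew-symmetric extension)\<close>
definition psi :: "nat \<Rightarrow> nat set \<Rightarrow> nat \<Rightarrow> nat set \<Rightarrow> complex" where
  "psi a I b J = (if a = 0 \<and> b = 0 then
      (if I = {} \<and> J = {1,2,3,4} then -2
       else if I = {1,2,3,4} \<and> J = {} then 2
       else (\<Sum>i\<in>{1..4}. if (I = {i} \<and> J = {1,2,3,4} - {i}) \<or> (J = {i} \<and> I = {1,2,3,4} - {i})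
                          then - ((-1) ^ ltc i {1,2,3,4}) else 0))
     else 0)"

text \<open>bracket [t^a xi_I, t^b xi_J] in g, as coefficient function on the basis\<close>
fun kbr :: "nat \<Rightarrow> nat set \<Rightarrow> nat \<Rightarrow> nat set \<Rightarrow> GB \<Rightarrow> complex" where
  "kbr a I b J (Tm n K) =
     (if a + b = n + 1 then
        (of_int (2 - int (card I)) * of_nat b - of_nat a * of_int (2 - int (card J))) * prodc I J K
      else 0)
   + (if a + b = n then (-1) ^ card I * (\<Sum>i\<in>{1..4}. dcoef i I J K) else 0)"
| "kbr a I b J Cen = psi a I b J"

fun brk :: "GB \<Rightarrow> GB \<Rightarrow> GB \<Rightarrow> complex" where
  "brk (Tm a I) (Tm b J) = kbr a I b J"
| "brk _ _ = (\<lambda>_. 0)"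

definition gdelta :: "GB \<Rightarrow> GB \<Rightarrow> complex" where
  "gdelta b = (\<lambda>c. if c = b then 1 else 0)"

definition xivec :: "complex \<Rightarrow> complex \<Rightarrow> complex \<Rightarrow> complex \<Rightarrow> complex \<Rightarrow> complex \<Rightarrow> GB \<Rightarrow> complex" where
  "xivec c13 c24 c14 c23 c12 c34 = (\<lambda>b.
     if b = Tm 0 {1,3} then c13 else if b = Tm 0 {2,4} then c24
     else if b = Tm 0 {1,4} then c14 else if b = Tm 0 {2,3} then c23
     else if b = Tm 0 {1,2} then c12 else if b = Tm 0 {3,4} then c34 else 0)"

definition ex_v :: "GB \<Rightarrow> complex" where "ex_v = xivec (-1/2) (-1/2) (-\<i>/2) (\<i>/2) 0 0"
definition fx_v :: "GB \<Rightarrow> complex" where "fx_v = xivec (1/2) (1/2) (-\<i>/2) (\<i>/2) 0 0"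
definition hx_v :: "GB \<Rightarrow> complex" where "hx_v = xivec 0 0 0 0 (-\<i>) \<i>"
definition ey_v :: "GB \<Rightarrow> complex" where "ey_v = xivec (-1/2) (1/2) (\<i>/2) (\<i>/2) 0 0"
definition fy_v :: "GB \<Rightarrow> complex" where "fy_v = xivec (1/2) (-1/2) (\<i>/2) (\<i>/2) 0 0"
definition hy_v :: "GB \<Rightarrow> complex" where "hy_v = xivec 0 0 0 0 (-\<i>) (-\<i>)"

datatype VX = A | B | C | D

text \<open>A monomial (a1,a2,b1,b2) is u1^a1 u2^a2 v1^b1 v2^b2 where u = x or d_x, v = y or d_y.\<close>
type_synonym mono = "nat \<times> nat \<times> nat \<times> nat"

definition xdual :: "VX \<Rightarrow> bool" where "xdual X = (X = B \<or> X = C)"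
definition ydual :: "VX \<Rightarrow> bool" where "ydual X = (X = C \<or> X = D)"

fun iX :: "VX \<Rightarrow> complex" where "iX A = 0" | "iX B = 1" | "iX C = 2" | "iX D = 1"
fun jX :: "VX \<Rightarrow> complex" where "jX A = 0" | "jX B = -1" | "jX C = 0" | "jX D = 1"

datatype slop = Raise | Lower | Hop | Eop
  \<comment> \<open>z1 d_z2, z2 d_z1, z1 d_z1 - z2 d_z2, z1 d_z1 + z2 d_z2\<close>

text \<open>action on a monomial in two variables (dual flag: variables are d_z1, d_z2)\<close>
fun pact :: "bool \<Rightarrow> slop \<Rightarrow> nat \<times> nat \<Rightarrow> complex \<times> (nat \<times> nat)" where
  "pact False Raise (a1, a2) = (of_nat a2, (a1 + 1, a2 - 1))"
| "pact False Lower (a1, a2) = (of_nat a1, (a1 - 1, a2 + 1))"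
| "pact False Hop (a1, a2) = (of_nat a1 - of_nat a2, (a1, a2))"
| "pact False Eop (a1, a2) = (of_nat a1 + of_nat a2, (a1, a2))"
| "pact True Raise (a1, a2) = (- of_nat a1, (a1 - 1, a2 + 1))"
| "pact True Lower (a1, a2) = (- of_nat a2, (a1 + 1, a2 - 1))"
| "pact True Hop (a1, a2) = (of_nat a2 - of_nat a1, (a1, a2))"
| "pact True Eop (a1, a2) = (- (of_nat a1 + of_nat a2), (a1, a2))"

definition mdelta :: "mono \<Rightarrow> mono \<Rightarrow> complex" where
  "mdelta m = (\<lambda>m'. if m' = m then 1 else 0)"

definition opx :: "VX \<Rightarrow> slop \<Rightarrow> mono \<Rightarrow> mono \<Rightarrow> complex" where
  "opx X s m = (case m of (a1, a2, b1, b2) \<Rightarrow>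
     (case pact (xdual X) s (a1, a2) of (c, (a1', a2')) \<Rightarrow> (\<lambda>m'. c * mdelta (a1', a2', b1, b2) m')))"

definition opy :: "VX \<Rightarrow> slop \<Rightarrow> mono \<Rightarrow> mono \<Rightarrow> complex" where
  "opy X s m = (case m of (a1, a2, b1, b2) \<Rightarrow>
     (case pact (ydual X) s (b1, b2) of (c, (b1', b2')) \<Rightarrow> (\<lambda>m'. c * mdelta (a1, a2, b1', b2') m')))"

definition Exv :: "VX \<Rightarrow> mono \<Rightarrow> complex" where
  "Exv X m = (case m of (a1, a2, b1, b2) \<Rightarrow> fst (pact (xdual X) Eop (a1, a2)))"
definition Eyv :: "VX \<Rightarrow> mono \<Rightarrow> complex" where
  "Eyv X m = (case m of (a1, a2, b1, b2) \<Rightarrow> fst (pact (ydual X) Eop (b1, b2)))"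

definition opC :: "VX \<Rightarrow> mono \<Rightarrow> mono \<Rightarrow> complex" where
  "opC X m = (\<lambda>m'. ((Exv X m - Eyv X m) / 2 + jX X) * mdelta m m')"
definition opT :: "VX \<Rightarrow> mono \<Rightarrow> mono \<Rightarrow> complex" where
  "opT X m = (\<lambda>m'. (- (Exv X m + Eyv X m) / 2 + iX X) * mdelta m m')"

text \<open>pairs (x, rho(x)) for a spanning set of g_{>=0}: C, t, e_x,...,h_y, and g_{>0} acting by 0\<close>
definition actgens :: "VX \<Rightarrow> ((GB \<Rightarrow> complex) \<times> (mono \<Rightarrow> mono \<Rightarrow> complex)) set" where
  "actgens X =
     {(gdelta Cen, opC X), (gdelta (Tm 1 {}), opT X),
      (ex_v, opx X Raise), (fx_v, opx X Lower), (hx_v, opx X Hop),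
      (ey_v, opy X Raise), (fy_v, opy X Lower), (hy_v, opy X Hop)}
   \<union> {(gdelta b, (\<lambda>_ _. 0)) | b. b \<in> gbasis \<and> gdeg b > 0}"

section \<open>M_X as a quotient of T(g) \<otimes> V_X\<close>

text \<open>Elements of T(g) \<otimes> V_X are (finite) coefficient functions on words of basis elements
  times monomials.\<close>
type_synonym key = "GB list \<times> mono"

inductive_set lspan :: "('k \<Rightarrow> complex) set \<Rightarrow> ('k \<Rightarrow> complex) set" for S where
  zero: "(\<lambda>_. 0) \<in> lspan S"
| base: "f \<in> S \<Longrightarrow> f \<in> lspan S"
| add: "f \<in> lspan S \<Longrightarrow> g \<in> lspan S \<Longrightarrow> (\<lambda>k. f k + g k) \<in> lspan S"
| smul: "f \<in> lspan S \<Longrightarrow> (\<lambda>k. c * f k) \<in> lspan S"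

text \<open>u \<otimes> x \<otimes> w \<otimes> m for words u, w, an element x of g and a monomial m\<close>
definition embw :: "GB list \<Rightarrow> (GB \<Rightarrow> complex) \<Rightarrow> GB list \<Rightarrow> mono \<Rightarrow> key \<Rightarrow> complex" where
  "embw u x w m = (\<lambda>(w', m'). if m' = m \<and> length w' = length u + 1 + length w
       \<and> take (length u) w' = u \<and> drop (length u + 1) w' = w then x (w' ! length u) else 0)"

text \<open>u \<otimes> v for a word u and v in V_X\<close>
definition tv :: "GB list \<Rightarrow> (mono \<Rightarrow> complex) \<Rightarrow> key \<Rightarrow> complex" where
  "tv u v = (\<lambda>(w', m'). if w' = u then v m' else 0)"

text \<open>left multiplication by x in g\<close>
definition lact :: "(GB \<Rightarrow> complex) \<Rightarrow> (key \<Rightarrow> complex) \<Rightarrow> key \<Rightarrow> complex" where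
  "lact x f = (\<lambda>(w, m). case w of [] \<Rightarrow> 0 | b # w' \<Rightarrow> x b * f (w', m))"

text \<open>generators of the kernel of T(g) \<otimes> V_X \<rightarrow> U(g) \<otimes>_{U(g_{>=0})} V_X\<close>
definition relgens :: "VX \<Rightarrow> (key \<Rightarrow> complex) set" where
  "relgens X =
     {(\<lambda>k. embw u (gdelta a) (b # w) m k
           - (-1) ^ (gpar a * gpar b) * embw u (gdelta b) (a # w) m k
           - embw u (brk a b) w m k)
       | u a b w m. u \<in> lists gbasis \<and> w \<in> lists gbasis \<and> a \<in> gbasis \<and> b \<in> gbasis}
   \<union> {(\<lambda>k. embw u x [] m k - tv u (r m) k)
       | u x r m. u \<in> lists gbasis \<and> (x, r) \<in> actgens X}"

definition gneg :: "GB set" where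
  "gneg = {b \<in> gbasis. gdeg b < 0}"

text \<open>preimage in T(g) \<otimes> V_X of F_k M_X (F_k M_X = 0 for k < 0)\<close>
definition Fpre :: "VX \<Rightarrow> int \<Rightarrow> (key \<Rightarrow> complex) set" where
  "Fpre X k = lspan (relgens X \<union>
     (if k < 0 then {} else {tv w (mdelta m) | w m. w \<in> lists gneg \<and> length w \<le> nat k}))"

text \<open>the element p(t)/2 of g corresponding to p(t) d_t in W(1,0)\<close>
definition wvec :: "complex poly \<Rightarrow> GB \<Rightarrow> complex" where
  "wvec p = (\<lambda>b. case b of Tm m I \<Rightarrow> (if I = {} then coeff p m / 2 else 0) | Cen \<Rightarrow> 0)"

end

theory Submission
  imports Defs
begin

text \<open>
  Modulo the relations, M_X is spanned by the words a_1 \<dots> a_r \<otimes> v with all a_i of negative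
  degree, and F_k is spanned by those with r \<le> k. A basis element b of degree d maps F_k into
  F_{k - \<lfloor>d/2\<rfloor>}: to see this on b a_1 \<dots> a_r \<otimes> v, move b to the right using
  b a = \<plusminus>a b + [b, a]. Since deg a \<ge> -2, the bracket [b, a] has degree at least d - 2, so
  induction on r applies to both terms. At the end of the word, b \<otimes> v vanishes if d > 0, lies in
  1 \<otimes> V_X = F_0 if d = 0 (g_0 acts on V_X) and is a word of length one if d < 0.
  Finally, p(t) \<partial>_t with t^{j+1} | p is a combination of the t^n with n \<ge> j + 1, whose degree
  2n - 2 is at least 2j.
\<close>

lemma lspan_sum:
  "finite G \<Longrightarrow> (\<And>c. c \<in> G \<Longrightarrow> g c \<in> lspan S) \<Longrightarrow> (\<lambda>k. \<Sum>c\<in>G. g c k) \<in> lspan S"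
  by (induction G rule: finite_induct) (auto intro: lspan.intros)

lemma lspan_linear_image:
  assumes add: "\<And>f g. L (\<lambda>k. f k + g k) = (\<lambda>k. L f k + L g k)"
    and smul: "\<And>c f. L (\<lambda>k. c * f k) = (\<lambda>k. c * L f k)"
    and base: "\<And>f. f \<in> S \<Longrightarrow> L f \<in> lspan T"
    and f: "f \<in> lspan S"
  shows "L f \<in> lspan T"
  using f
proof (induction rule: lspan.induct)
  case zero
  have "L (\<lambda>k. 0 * 0) = (\<lambda>k. 0 * L (\<lambda>_. 0) k)" by (rule smul)
  then show ?case by (simp add: lspan.zero)
qed (auto simp: add smul base intro: lspan.intros)

lemma gdelta_expansion:
  assumes "finite S" "{c. x c \<noteq> 0} \<subseteq> S"
  shows "x = (\<lambda>b. \<Sum>c\<in>S. x c * gdelta c b)"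
proof
  fix b
  have "(\<Sum>c\<in>S. x c * gdelta c b) = (\<Sum>c\<in>S. if c = b then x b else 0)"
    by (rule sum.cong) (auto simp: gdelta_def)
  then show "x b = (\<Sum>c\<in>S. x c * gdelta c b)"
    using assms by (auto simp: sum.delta')
qed

lemma embw_gdelta_expansion:
  assumes "finite S" "{c. x c \<noteq> 0} \<subseteq> S"
  shows "embw u x w m = (\<lambda>k. \<Sum>c\<in>S. x c * embw u (gdelta c) w m k)"
proof -
  have "embw u x w m = embw u (\<lambda>b. \<Sum>c\<in>S. x c * gdelta c b) w m"
    using gdelta_expansion[OF assms] by (rule arg_cong)
  also have "\<dots> = (\<lambda>k. \<Sum>c\<in>S. x c * embw u (gdelta c) w m k)"
    by (auto simp: embw_def fun_eq_iff)
  finally show ?thesis .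
qed

lemma lact_gdelta_expansion:
  assumes "finite S" "{c. x c \<noteq> 0} \<subseteq> S"
  shows "lact x f = (\<lambda>k. \<Sum>c\<in>S. x c * lact (gdelta c) f k)"
proof -
  have "lact x f = lact (\<lambda>b. \<Sum>c\<in>S. x c * gdelta c b) f"
    using gdelta_expansion[OF assms] by (rule arg_cong)
  also have "\<dots> = (\<lambda>k. \<Sum>c\<in>S. x c * lact (gdelta c) f k)"
    by (auto simp: lact_def fun_eq_iff sum_distrib_right mult.assoc split: list.split)
  finally show ?thesis .
qed

lemma embw_add: "embw u (\<lambda>b. x b + y b) w m = (\<lambda>k. embw u x w m k + embw u y w m k)"
  by (auto simp: embw_def fun_eq_iff)

lemma embw_smul: "embw u (\<lambda>b. c * x b) w m = (\<lambda>k. c * embw u x w m k)"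
  by (auto simp: embw_def fun_eq_iff)

lemma embw_Nil_gdelta: "embw [] (gdelta b) w m = tv (b # w) (mdelta m)"
proof (rule ext, clarify)
  fix w' m'
  show "embw [] (gdelta b) w m (w', m') = tv (b # w) (mdelta m) (w', m')"
    by (cases w') (auto simp: embw_def tv_def gdelta_def mdelta_def)
qed

lemma lact_add: "lact x (\<lambda>k. f k + g k) = (\<lambda>k. lact x f k + lact x g k)"
  by (auto simp: lact_def fun_eq_iff distrib_left split: list.split)

lemma lact_diff: "lact x (\<lambda>k. f k - g k) = (\<lambda>k. lact x f k - lact x g k)"
  by (auto simp: lact_def fun_eq_iff algebra_simps split: list.split)

lemma lact_smul: "lact x (\<lambda>k. c * f k) = (\<lambda>k. c * lact x f k)"
  by (auto simp: lact_def fun_eq_iff split: list.split)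

lemma lact_gdelta_embw: "lact (gdelta b) (embw u x w m) = embw (b # u) x w m"
  by (auto simp: lact_def embw_def gdelta_def fun_eq_iff split: list.split)

lemma lact_gdelta_tv: "lact (gdelta b) (tv u v) = tv (b # u) v"
  by (auto simp: lact_def tv_def gdelta_def fun_eq_iff split: list.split)

lemma lact_gdelta_relgens:
  assumes "b \<in> gbasis" "r \<in> relgens X"
  shows "lact (gdelta b) r \<in> relgens X"
  using assms(2)[unfolded relgens_def]
proof (elim UnE CollectE exE conjE)
  fix u a c w m
  assume r: "r = (\<lambda>k. embw u (gdelta a) (c # w) m k
      - (-1) ^ (gpar a * gpar c) * embw u (gdelta c) (a # w) m k - embw u (brk a c) w m k)"
    and "u \<in> lists gbasis" "w \<in> lists gbasis" "a \<in> gbasis" "c \<in> gbasis"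
  have eq: "lact (gdelta b) r = (\<lambda>k. embw (b # u) (gdelta a) (c # w) m k
      - (-1) ^ (gpar a * gpar c) * embw (b # u) (gdelta c) (a # w) m k - embw (b # u) (brk a c) w m k)"
    by (simp add: r lact_diff lact_smul lact_gdelta_embw)
  show ?thesis
    unfolding eq relgens_def
    using assms(1) \<open>u \<in> lists gbasis\<close> \<open>w \<in> lists gbasis\<close> \<open>a \<in> gbasis\<close> \<open>c \<in> gbasis\<close>
    by (intro UnI1 CollectI exI[of _ "b # u"] exI[of _ a] exI[of _ c] exI[of _ w] exI[of _ m]) simp
next
  fix u x s m
  assume r: "r = (\<lambda>k. embw u x [] m k - tv u (s m) k)"
    and "u \<in> lists gbasis" "(x, s) \<in> actgens X"
  have eq: "lact (gdelta b) r = (\<lambda>k. embw (b # u) x [] m k - tv (b # u) (s m) k)"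
    by (simp add: r lact_diff lact_gdelta_embw lact_gdelta_tv)
  show ?thesis
    unfolding eq relgens_def using assms(1) \<open>u \<in> lists gbasis\<close> \<open>(x, s) \<in> actgens X\<close>
    by (intro UnI2 CollectI exI[of _ "b # u"] exI[of _ x] exI[of _ s] exI[of _ m]) simp
qed

lemma Fpre_add: "f \<in> Fpre X k \<Longrightarrow> g \<in> Fpre X k \<Longrightarrow> (\<lambda>k'. f k' + g k') \<in> Fpre X k"
  unfolding Fpre_def by (rule lspan.add)

lemma Fpre_smul: "f \<in> Fpre X k \<Longrightarrow> (\<lambda>k'. c * f k') \<in> Fpre X k"
  unfolding Fpre_def by (rule lspan.smul)

lemma Fpre_sum:
  "finite G \<Longrightarrow> (\<And>c. c \<in> G \<Longrightarrow> g c \<in> Fpre X k) \<Longrightarrow> (\<lambda>k'. \<Sum>c\<in>G. g c k') \<in> Fpre X k"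
  unfolding Fpre_def by (rule lspan_sum)

lemma relgens_in_Fpre: "r \<in> relgens X \<Longrightarrow> r \<in> Fpre X k"
  unfolding Fpre_def by (auto intro: lspan.base)

lemma tv_in_Fpre:
  assumes "w \<in> lists gneg" "int (length w) \<le> k"
  shows "tv w (mdelta m) \<in> Fpre X k"
proof -
  have "\<not> k < 0" "length w \<le> nat k" using assms(2) by linarith+
  then show ?thesis
    unfolding Fpre_def using assms(1) by (auto simp del: split_paired_Ex intro!: lspan.base)
qed

lemma Fpre_linear_image:
  assumes add: "\<And>f g. L (\<lambda>k. f k + g k) = (\<lambda>k. L f k + L g k)"
    and smul: "\<And>c f. L (\<lambda>k. c * f k) = (\<lambda>k. c * L f k)"
    and rel: "\<And>r. r \<in> relgens X \<Longrightarrow> L r \<in> Fpre X k'"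
    and gen: "\<And>w m. w \<in> lists gneg \<Longrightarrow> int (length w) \<le> k \<Longrightarrow> L (tv w (mdelta m)) \<in> Fpre X k'"
    and f: "f \<in> Fpre X k"
  shows "L f \<in> Fpre X k'"
proof -
  obtain T where T: "Fpre X k' = lspan T" by (auto simp: Fpre_def)
  have "L f \<in> lspan T"
  proof (rule lspan_linear_image[OF add smul _ f[unfolded Fpre_def]])
    fix g
    assume "g \<in> relgens X \<union> (if k < 0 then {} else {tv w (mdelta m) | w m. w \<in> lists gneg \<and> length w \<le> nat k})"
    then consider "g \<in> relgens X"
      | w m where "g = tv w (mdelta m)" "w \<in> lists gneg" "int (length w) \<le> k"
      by (cases "k < 0") (auto simp: le_nat_iff in_lists_conv_set)
    then show "L g \<in> lspan T"
      unfolding T[symmetric] by cases (auto intro: rel gen)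
  qed
  then show ?thesis using T by simp
qed

lemma Fpre_mono:
  assumes "k \<le> k'" "f \<in> Fpre X k"
  shows "f \<in> Fpre X k'"
proof (rule Fpre_linear_image[where L = "\<lambda>f. f", OF _ _ _ _ assms(2)])
  show "tv w (mdelta m) \<in> Fpre X k'" if "w \<in> lists gneg" "int (length w) \<le> k" for w m
    using that assms(1) by (intro tv_in_Fpre) simp_all
qed (simp_all add: relgens_in_Fpre)

lemma lact_gdelta_Fpre_image:
  assumes "b \<in> gbasis"
    and "\<And>w m. w \<in> lists gneg \<Longrightarrow> int (length w) \<le> k \<Longrightarrow> tv (b # w) (mdelta m) \<in> Fpre X k'"
    and "f \<in> Fpre X k"
  shows "lact (gdelta b) f \<in> Fpre X k'"
  by (rule Fpre_linear_image[OF lact_add lact_smul _ _ assms(3)])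
     (simp_all add: assms(1,2) lact_gdelta_tv relgens_in_Fpre lact_gdelta_relgens)

lemma lact_gneg_Fpre:
  assumes "a \<in> gneg" "f \<in> Fpre X k"
  shows "lact (gdelta a) f \<in> Fpre X (k + 1)"
proof (rule lact_gdelta_Fpre_image[OF _ _ assms(2)])
  show "a \<in> gbasis" using assms(1) by (simp add: gneg_def)
  show "tv (a # w) (mdelta m) \<in> Fpre X (k + 1)" if "w \<in> lists gneg" "int (length w) \<le> k" for w m
    using that assms(1) by (intro tv_in_Fpre) simp_all
qed

section \<open>The grading of the bracket\<close>

lemma prodc_nonzero: "prodc I J K \<noteq> 0 \<Longrightarrow> I \<inter> J = {} \<and> K = I \<union> J"
  by (auto simp: prodc_def split: if_splits)

lemma kbr_graded:
  assumes I: "I \<subseteq> {1,2,3,4}" and J: "J \<subseteq> {1,2,3,4}" and nz: "kbr a I b J (Tm n K) \<noteq> 0"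
  shows "K \<subseteq> {1,2,3,4} \<and> gdeg (Tm n K) = gdeg (Tm a I) + gdeg (Tm b J)"
proof -
  have fin: "finite I" "finite J" using I J finite_subset by auto
  from nz consider
      (t_part) "a + b = n + 1" "prodc I J K \<noteq> 0"
    | (xi_part) "a + b = n" "(\<Sum>i\<in>{1..4}. dcoef i I J K) \<noteq> 0"
    by (auto split: if_splits)
  then show ?thesis
  proof cases
    case t_part
    then have "I \<inter> J = {}" "K = I \<union> J" using prodc_nonzero by auto
    then show ?thesis using t_part I J fin by (auto simp: card_Un_disjoint)
  next
    case xi_part
    then obtain i where "dcoef i I J K \<noteq> 0" by (meson sum.neutral)
    then have i: "i \<in> I" "i \<in> J" and "prodc (I - {i}) (J - {i}) K \<noteq> 0"
      by (auto simp: dcoef_def split: if_splits)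
    then have "(I - {i}) \<inter> (J - {i}) = {}" "K = (I - {i}) \<union> (J - {i})"
      using prodc_nonzero by auto
    moreover have "card (I - {i}) + 1 = card I" "card (J - {i}) + 1 = card J"
      using i fin card_Suc_Diff1 by fastforce+
    ultimately show ?thesis using xi_part I J fin by (auto simp: card_Un_disjoint)
  qed
qed

lemma psi_graded:
  assumes "psi a I b J \<noteq> 0"
  shows "a = 0 \<and> b = 0 \<and> card I + card J = 4"
proof -
  have ab: "a = 0" "b = 0" using assms by (auto simp: psi_def split: if_splits)
  have "psi a I b J = 0"
    if "\<not> (I = {} \<and> J = {1,2,3,4} \<or> I = {1,2,3,4} \<and> J = {})"
      and "\<forall>i\<in>{1..4}. \<not> (I = {i} \<and> J = {1,2,3,4} - {i} \<or> J = {i} \<and> I = {1,2,3,4} - {i})"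
    using that unfolding psi_def by (auto intro!: sum.neutral)
  then consider "I = {} \<and> J = {1,2,3,4} \<or> I = {1,2,3,4} \<and> J = {}"
    | i where "i \<in> {1..4}" "I = {i} \<and> J = {1,2,3,4} - {i} \<or> J = {i} \<and> I = {1,2,3,4} - {i}"
    using assms by blast
  moreover have "card ({1,2,3,4} - {i}) = 3" if "i \<in> {1..4}" for i :: nat
  proof -
    have "i \<in> {1,2,3,4}" using that by auto
    then show ?thesis by (simp add: card_Diff_singleton)
  qed
  ultimately show ?thesis
    using ab by cases auto
qed

lemma brk_graded:
  assumes "a \<in> gbasis" "b \<in> gbasis" "brk a b c \<noteq> 0"
  shows "c \<in> gbasis \<and> gdeg c = gdeg a + gdeg b"
proof -
  obtain n1 I where a: "a = Tm n1 I" "I \<subseteq> {1,2,3,4}" using assms by (cases a) (auto simp: gbasis_def)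
  obtain n2 J where b: "b = Tm n2 J" "J \<subseteq> {1,2,3,4}" using assms by (cases a; cases b) (auto simp: gbasis_def)
  show ?thesis
  proof (cases c)
    case (Tm n K)
    then show ?thesis using kbr_graded[OF a(2) b(2), of n1 n2 n K] assms a b by (auto simp: gbasis_def)
  next
    case Cen
    then show ?thesis using psi_graded[of n1 I n2 J] assms a b by (auto simp: gbasis_def)
  qed
qed

lemma gdeg_ge: "gdeg b \<ge> -2"
  by (cases b) auto

lemma finite_gbasis_gdeg_le: "finite {c \<in> gbasis. gdeg c \<le> d}"
proof (rule finite_subset)
  show "{c \<in> gbasis. gdeg c \<le> d} \<subseteq> insert Cen ((\<lambda>(n, K). Tm n K) ` ({..nat d + 2} \<times> Pow {1,2,3,4}))"
  proof
    fix c assume c: "c \<in> {c \<in> gbasis. gdeg c \<le> d}"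
    show "c \<in> insert Cen ((\<lambda>(n, K). Tm n K) ` ({..nat d + 2} \<times> Pow {1,2,3,4}))"
    proof (cases c)
      case (Tm n K)
      then have "n \<le> nat d + 2" "K \<subseteq> {1,2,3,4}" using c by (auto simp: gbasis_def)
      then show ?thesis using Tm by auto
    qed simp
  qed
qed simp

section \<open>The action of g_0 on V_X\<close>

definition preserves_F0 :: "VX \<Rightarrow> (GB \<Rightarrow> complex) set" where
  "preserves_F0 X = {x. \<forall>m. embw [] x [] m \<in> Fpre X 0}"

lemma preserves_F0_add: "x \<in> preserves_F0 X \<Longrightarrow> y \<in> preserves_F0 X \<Longrightarrow> (\<lambda>b. x b + y b) \<in> preserves_F0 X"
  unfolding preserves_F0_def by (simp add: embw_add Fpre_add)

lemma preserves_F0_smul: "x \<in> preserves_F0 X \<Longrightarrow> (\<lambda>b. c * x b) \<in> preserves_F0 X"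
  unfolding preserves_F0_def by (simp add: embw_smul Fpre_smul)

lemma actgens_monomial:
  assumes "(x, r) \<in> actgens X"
  obtains c m' where "r m = (\<lambda>m''. c * mdelta m' m'')"
proof -
  obtain a1 a2 b1 b2 where m: "m = (a1, a2, b1, b2)" by (cases m)
  have "\<exists>c m'. r m = (\<lambda>m''. c * mdelta m' m'')"
    using assms unfolding actgens_def
    by (auto simp: m opC_def opT_def opx_def opy_def split: prod.split; metis mult_zero_left)
  then show ?thesis using that by blast
qed

lemma actgens_preserves_F0:
  assumes "(x, r) \<in> actgens X"
  shows "x \<in> preserves_F0 X"
  unfolding preserves_F0_def
proof (intro CollectI allI)
  fix m
  obtain c m' where r: "r m = (\<lambda>m''. c * mdelta m' m'')"
    using actgens_monomial[OF assms] .
  have "(\<lambda>k. embw [] x [] m k - tv [] (r m) k) \<in> relgens X"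
    unfolding relgens_def using assms by blast
  then have "(\<lambda>k. (embw [] x [] m k - tv [] (r m) k) + c * tv [] (mdelta m') k) \<in> Fpre X 0"
    by (intro Fpre_add Fpre_smul relgens_in_Fpre tv_in_Fpre) simp_all
  moreover have "tv [] (r m) = (\<lambda>k. c * tv [] (mdelta m') k)"
    by (auto simp: r tv_def fun_eq_iff)
  ultimately show "embw [] x [] m \<in> Fpre X 0"
    by simp
qed

lemma gdelta_xi13: "gdelta (Tm 0 {1,3}) = (\<lambda>b. 1/2 * fx_v b + -1/2 * ex_v b + 1/2 * fy_v b + -1/2 * ey_v b)"
  by (auto simp: fun_eq_iff gdelta_def xivec_def ex_v_def fx_v_def ey_v_def fy_v_def doubleton_eq_iff)

lemma gdelta_xi24: "gdelta (Tm 0 {2,4}) = (\<lambda>b. 1/2 * fx_v b + -1/2 * ex_v b + -1/2 * fy_v b + 1/2 * ey_v b)"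
  by (auto simp: fun_eq_iff gdelta_def xivec_def ex_v_def fx_v_def ey_v_def fy_v_def doubleton_eq_iff)

lemma gdelta_xi14: "gdelta (Tm 0 {1,4}) = (\<lambda>b. \<i>/2 * fx_v b + \<i>/2 * ex_v b + -\<i>/2 * fy_v b + -\<i>/2 * ey_v b)"
  by (auto simp: fun_eq_iff gdelta_def xivec_def ex_v_def fx_v_def ey_v_def fy_v_def doubleton_eq_iff field_simps)

lemma gdelta_xi23: "gdelta (Tm 0 {2,3}) = (\<lambda>b. -\<i>/2 * fx_v b + -\<i>/2 * ex_v b + -\<i>/2 * fy_v b + -\<i>/2 * ey_v b)"
  by (auto simp: fun_eq_iff gdelta_def xivec_def ex_v_def fx_v_def ey_v_def fy_v_def doubleton_eq_iff field_simps)

lemma gdelta_xi12: "gdelta (Tm 0 {1,2}) = (\<lambda>b. \<i>/2 * hx_v b + \<i>/2 * hy_v b)"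
  by (auto simp: fun_eq_iff gdelta_def xivec_def hx_v_def hy_v_def doubleton_eq_iff field_simps)

lemma gdelta_xi34: "gdelta (Tm 0 {3,4}) = (\<lambda>b. -\<i>/2 * hx_v b + \<i>/2 * hy_v b)"
  by (auto simp: fun_eq_iff gdelta_def xivec_def hx_v_def hy_v_def doubleton_eq_iff field_simps)

lemma card_2_subset_1234:
  assumes "I \<subseteq> {1,2,3,4::nat}" "card I = 2"
  shows "I = {1,2} \<or> I = {1,3} \<or> I = {1,4} \<or> I = {2,3} \<or> I = {2,4} \<or> I = {3,4}"
proof -
  obtain x y where xy: "I = {x,y}" "x \<noteq> y" using assms(2) by (auto simp: card_2_iff)
  then have "x \<in> {1,2,3,4}" "y \<in> {1,2,3,4}" using assms(1) by auto
  then show ?thesis using xy by (auto simp: insert_commute)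
qed

lemma gdeg_zero_preserves_F0:
  assumes "b \<in> gbasis" "gdeg b = 0"
  shows "gdelta b \<in> preserves_F0 X"
proof -
  have gens: "gdelta Cen \<in> preserves_F0 X" "gdelta (Tm 1 {}) \<in> preserves_F0 X"
    "ex_v \<in> preserves_F0 X" "fx_v \<in> preserves_F0 X" "hx_v \<in> preserves_F0 X"
    "ey_v \<in> preserves_F0 X" "fy_v \<in> preserves_F0 X" "hy_v \<in> preserves_F0 X"
    using actgens_preserves_F0[of _ _ X] unfolding actgens_def by blast+
  show ?thesis
  proof (cases b)
    case (Tm n I)
    have I: "I \<subseteq> {1,2,3,4}" "finite I"
      using assms Tm by (auto simp: gbasis_def intro: finite_subset)
    have "2 * int n + int (card I) = 2" using assms Tm by simp
    then have "n = 1 \<and> card I = 0 \<or> n = 0 \<and> card I = 2" by arith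
    then consider "n = 1" "I = {}" | "n = 0" "card I = 2"
      using I(2) by auto
    then show ?thesis
    proof cases
      case 1
      then show ?thesis using Tm gens by simp
    next
      case 2
      from card_2_subset_1234[OF I(1) 2(2)] show ?thesis
        unfolding Tm 2(1)
        by (elim disjE) (simp_all only: gdelta_xi12 gdelta_xi13 gdelta_xi14 gdelta_xi23 gdelta_xi24 gdelta_xi34,
            (intro preserves_F0_add preserves_F0_smul gens)+)
    qed
  qed (use gens in simp)
qed

section \<open>Basis elements shift the filtration by half their degree\<close>

lemma gdeg_pos_tv_relgens:
  assumes "b \<in> gbasis" "0 < gdeg b"
  shows "tv [b] (mdelta m) \<in> relgens X"
proof -
  have "(gdelta b, \<lambda>_ _. 0) \<in> actgens X"
    using assms unfolding actgens_def by blast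
  then have "(\<lambda>k. embw [] (gdelta b) [] m k - tv [] ((\<lambda>_ _. 0) m) k) \<in> relgens X"
    unfolding relgens_def by (intro UnI2 CollectI exI[of _ "[]"] exI[of _ "gdelta b"] exI[of _ "\<lambda>_ _. 0"] exI[of _ m]) simp
  moreover have "(\<lambda>k. embw [] (gdelta b) [] m k - tv [] ((\<lambda>_ _. 0) m) k) = tv [b] (mdelta m)"
    by (auto simp: embw_Nil_gdelta tv_def fun_eq_iff)
  ultimately show ?thesis by simp
qed

lemma embw_brk_Fpre:
  assumes "a \<in> gbasis" "b \<in> gbasis"
    and "\<And>c. c \<in> gbasis \<Longrightarrow> gdeg c = gdeg a + gdeg b \<Longrightarrow> tv (c # w) (mdelta m) \<in> Fpre X k"
  shows "embw [] (brk a b) w m \<in> Fpre X k"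
proof -
  define S where "S = {c \<in> gbasis. gdeg c = gdeg a + gdeg b}"
  have S: "finite S" "{c. brk a b c \<noteq> 0} \<subseteq> S"
    by (rule finite_subset[OF _ finite_gbasis_gdeg_le[of "gdeg a + gdeg b"]])
       (use brk_graded[OF assms(1,2)] in \<open>auto simp: S_def\<close>)
  have "(\<lambda>k. \<Sum>c\<in>S. brk a b c * embw [] (gdelta c) w m k) \<in> Fpre X k"
    using S(1) assms(3) by (intro Fpre_sum Fpre_smul) (auto simp: S_def embw_Nil_gdelta)
  then show ?thesis
    by (simp only: embw_gdelta_expansion[OF S])
qed

lemma tv_single_in_Fpre:
  assumes "b \<in> gbasis"
  shows "tv [b] (mdelta m) \<in> Fpre X (- (gdeg b div 2))"
proof -
  consider "0 < gdeg b" | "gdeg b < 0" | "gdeg b = 0" by linarith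
  then show ?thesis
  proof cases
    case 1
    then show ?thesis using assms gdeg_pos_tv_relgens relgens_in_Fpre by blast
  next
    case 2
    then have "gdeg b div 2 = -1" using gdeg_ge[of b] by linarith
    moreover have "b \<in> gneg" using 2 assms by (simp add: gneg_def)
    ultimately show ?thesis by (simp add: tv_in_Fpre)
  next
    case 3
    then have "gdelta b \<in> preserves_F0 X" using assms by (intro gdeg_zero_preserves_F0)
    then have "embw [] (gdelta b) [] m \<in> Fpre X 0" unfolding preserves_F0_def by blast
    then show ?thesis using 3 by (simp add: embw_Nil_gdelta)
  qed
qed

lemma tv_Cons_in_Fpre:
  assumes "w \<in> lists gneg" "b \<in> gbasis"
  shows "tv (b # w) (mdelta m) \<in> Fpre X (int (length w) - gdeg b div 2)"
  using assms
proof (induction arbitrary: b m rule: lists.induct)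
  case Nil
  then show ?case using tv_single_in_Fpre by simp
next
  case (Cons a w)
  have a: "a \<in> gbasis" "gdeg a < 0" and w: "w \<in> lists gbasis"
    using Cons.hyps by (auto simp: gneg_def)
  define k where "k = int (length (a # w)) - gdeg b div 2"
  define s :: complex where "s = (-1) ^ (gpar b * gpar a)"
  define r where "r = (\<lambda>k. embw [] (gdelta b) (a # w) m k
      - s * embw [] (gdelta a) (b # w) m k - embw [] (brk b a) w m k)"
  have "r \<in> relgens X"
    unfolding relgens_def r_def s_def using a w Cons.prems by blast
  then have rel: "r \<in> Fpre X k" by (rule relgens_in_Fpre)
  have "lact (gdelta a) (tv (b # w) (mdelta m)) \<in> Fpre X (int (length w) - gdeg b div 2 + 1)"
    using Cons.hyps(1) Cons.IH[OF Cons.prems] by (rule lact_gneg_Fpre)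
  then have swap: "embw [] (gdelta a) (b # w) m \<in> Fpre X k"
    by (simp add: k_def embw_Nil_gdelta lact_gdelta_tv algebra_simps)
  have bracket: "embw [] (brk b a) w m \<in> Fpre X k"
  proof (rule embw_brk_Fpre[OF Cons.prems a(1)])
    fix c
    assume "c \<in> gbasis" "gdeg c = gdeg b + gdeg a"
    moreover have "int (length w) - (gdeg b + gdeg a) div 2 \<le> k"
      using gdeg_ge[of a] by (simp add: k_def)
    ultimately show "tv (c # w) (mdelta m) \<in> Fpre X k"
      using Cons.IH Fpre_mono by metis
  qed
  have "(\<lambda>k. r k + s * embw [] (gdelta a) (b # w) m k + embw [] (brk b a) w m k) \<in> Fpre X k"
    using rel swap bracket by (intro Fpre_add Fpre_smul)
  then show ?case
    by (simp add: r_def k_def embw_Nil_gdelta)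
qed

lemma lact_gdelta_Fpre:
  assumes "b \<in> gbasis" "f \<in> Fpre X k"
  shows "lact (gdelta b) f \<in> Fpre X (k - gdeg b div 2)"
proof (rule lact_gdelta_Fpre_image[OF assms(1) _ assms(2)])
  fix w m
  assume "w \<in> lists gneg" "int (length w) \<le> k"
  then show "tv (b # w) (mdelta m) \<in> Fpre X (k - gdeg b div 2)"
    using tv_Cons_in_Fpre[OF _ assms(1)] Fpre_mono by (metis diff_right_mono)
qed

lemma lact_Fpre_if_gdeg_ge:
  assumes "finite S" "{c. x c \<noteq> 0} \<subseteq> S"
    and "\<And>c. c \<in> S \<Longrightarrow> c \<in> gbasis \<and> 2 * j \<le> gdeg c" "f \<in> Fpre X k"
  shows "lact x f \<in> Fpre X (k - j)"
  unfolding lact_gdelta_expansion[OF assms(1,2)]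
proof (rule Fpre_sum[OF assms(1)], rule Fpre_smul)
  fix c
  assume "c \<in> S"
  then have "c \<in> gbasis" "2 * j \<le> gdeg c" using assms(3) by auto
  then have "j \<le> gdeg c div 2" using zdiv_mono1[of "2 * j" "gdeg c" 2] by simp
  then show "lact (gdelta c) f \<in> Fpre X (k - j)"
    using lact_gdelta_Fpre[OF \<open>c \<in> gbasis\<close> assms(4)] Fpre_mono by (metis diff_left_mono)
qed

lemma coeff_eq_0_if_X_power_dvd:
  "[:0, 1:] ^ k dvd (p :: 'a :: comm_ring_1 poly) \<Longrightarrow> n < k \<Longrightarrow> coeff p n = 0"
  using monom_1_dvd_iff'[of k p] by (simp add: monom_altdef)

theorem lemma6p5:
  fixes i :: nat and j :: int and X :: VX and p :: "complex poly"
  assumes "j \<ge> -1"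
    and "[:0, 1:] ^ nat (j + 1) dvd p"
  shows "\<forall>f \<in> Fpre X (int i). lact (wvec p) f \<in> Fpre X (int i - j)"
proof
  fix f
  assume f: "f \<in> Fpre X (int i)"
  define S where "S = (\<lambda>n. Tm n {}) ` {nat (j + 1)..degree p}"
  have fin: "finite S" by (simp add: S_def)
  have supp: "{c. wvec p c \<noteq> 0} \<subseteq> S"
  proof
    fix c
    assume "c \<in> {c. wvec p c \<noteq> 0}"
    then have nz: "wvec p c \<noteq> 0" by simp
    show "c \<in> S"
    proof (cases c)
      case (Tm n I)
      with nz have "I = {}" "coeff p n \<noteq> 0" by (auto simp: wvec_def split: if_splits)
      moreover have "n \<le> degree p" "\<not> n < nat (j + 1)"
        using le_degree coeff_eq_0_if_X_power_dvd[OF assms(2)] \<open>coeff p n \<noteq> 0\<close> by blast+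
      ultimately show ?thesis using Tm by (simp add: S_def)
    qed (use nz in \<open>simp add: wvec_def\<close>)
  qed
  have deg: "c \<in> gbasis \<and> 2 * j \<le> gdeg c" if "c \<in> S" for c
    using that assms(1) by (auto simp: S_def gbasis_def)
  show "lact (wvec p) f \<in> Fpre X (int i - j)"
    by (rule lact_Fpre_if_gdeg_ge[OF fin supp deg f])
qed

end
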